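(* Let $M\ge1$, let $k\in\{0\}\times\mathbb{Z}_+^M$ and let $m\in\mathbb{Z}^{M+1}$ with $0\leq m\leq\min\{k,\tilde{k}\}$. Then \[ \#\left\{\mathsf{p}\in\mathsf{S}_M^\prime\,|\,(\kappa^\prime(\mathsf{p}),\beta^\prime(\mathsf{p}))=(k,m)\right\}=\binom{k}{m}\binom{\tilde{k}}{m}. \]
   Context: Fix depths $z_{-1}<z_0<\cdots<z_M<z_{M+1}$; $\mathbb{Z}_+$ denotes the nonnegative integers. A transmission scattering sequence is a finite sequence $\mathsf{p}=(\mathsf{p}_0,\ldots,\mathsf{p}_L)$ with $\mathsf{p}_0=z_{-1}$, $\mathsf{p}_L=z_{M+1}$, $\mathsf{p}_i\in\{z_0,\ldots,z_M\}$ for $1\le i\le L-1$, and for every $0\le i\le L-1$ there is $-1\le j\le M$ with $\{\mathsf{p}_i,\mathsf{p}_{i+1}\}=\{z_j,z_{j+1}\}$; $\mathsf{S}_M^\prime$ is the set of these. For $0\le n\le M$, consider the maximal runs of consecutive indices $i$ with $\mathsf{p}_i\in\{z_n,\ldots,z_{M+1}\}$; the last one (containing index $L$) is the trunk run. $k_n$ is the number of non-trunk runs and $m_n$ the number of non-trunk runs of length at least 2; $\kappa^\prime(\mathsf{p})=(k_0,\ldots,k_M)$, $\beta^\prime(\mathsf{p})=(m_0,\ldots,m_M)$. Notation: $\tilde{k}=(k_1,\ldots,k_M,0)$; $\min$ and $\le$ entrywise; $0$ the zero vector; $\binom{x}{y}=\prod_{n=0}^M\binom{x_n}{y_n}$.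 *)

theory Defs
  imports Complex_Main
begin

text \<open>Depths are given by z :: int => real, strictly increasing on {-1..M+1};
  z j is the depth z_j.  A sequence (p_0,...,p_L) is a nonempty real list, L = length p - 1.\<close>

definition trans_seq :: "(int \<Rightarrow> real) \<Rightarrow> nat \<Rightarrow> real list \<Rightarrow> bool" where
  "trans_seq z M p \<longleftrightarrow> p \<noteq> [] \<and> p ! 0 = z (-1) \<and> p ! (length p - 1) = z (int M + 1)
     \<and> (\<forall>i. 1 \<le> i \<and> i + 2 \<le> length p \<longrightarrow> p ! i \<in> z ` {0..int M})
     \<and> (\<forall>i. i + 1 < length p \<longrightarrow> (\<exists>j\<in>{-1..int M}. {p ! i, p ! (i+1)} = {z j, z (j+1)}))"

definition S_M' :: "(int \<Rightarrow> real) \<Rightarrow> nat \<Rightarrow> real list set" where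
  "S_M' z M = {p. trans_seq z M p}"

definition is_run :: "(nat \<Rightarrow> bool) \<Rightarrow> nat \<Rightarrow> nat \<Rightarrow> nat \<Rightarrow> bool" where
  "is_run P L a b \<longleftrightarrow> a \<le> b \<and> b \<le> L \<and> (\<forall>i\<in>{a..b}. P i)
     \<and> (a = 0 \<or> \<not> P (a - 1)) \<and> (b = L \<or> \<not> P (b + 1))"

text \<open>Runs of indices i with p_i in {z_n,...,z_{M+1}}; the trunk run is the one containing L.\<close>
definition runs_of :: "(int \<Rightarrow> real) \<Rightarrow> nat \<Rightarrow> real list \<Rightarrow> int \<Rightarrow> (nat \<times> nat) set" where
  "runs_of z M p n = {(a, b). is_run (\<lambda>i. p ! i \<in> z ` {n..int M + 1}) (length p - 1) a b}"

definition k_n :: "(int \<Rightarrow> real) \<Rightarrow> nat \<Rightarrow> real list \<Rightarrow> int \<Rightarrow> nat" where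
  "k_n z M p n = card {(a, b) \<in> runs_of z M p n. b \<noteq> length p - 1}"

definition m_n :: "(int \<Rightarrow> real) \<Rightarrow> nat \<Rightarrow> real list \<Rightarrow> int \<Rightarrow> nat" where
  "m_n z M p n = card {(a, b) \<in> runs_of z M p n. b \<noteq> length p - 1 \<and> b - a + 1 \<ge> 2}"

definition kappa' :: "(int \<Rightarrow> real) \<Rightarrow> nat \<Rightarrow> real list \<Rightarrow> nat list" where
  "kappa' z M p = map (k_n z M p) [0..int M]"

definition beta' :: "(int \<Rightarrow> real) \<Rightarrow> nat \<Rightarrow> real list \<Rightarrow> nat list" where
  "beta' z M p = map (m_n z M p) [0..int M]"

definition ktilde :: "nat list \<Rightarrow> nat list" where
  "ktilde k = tl k @ [0]"

definition binom_vec :: "nat \<Rightarrow> nat list \<Rightarrow> nat list \<Rightarrow> nat" where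
  "binom_vec M x y = (\<Prod>n\<le>M. (x ! n) choose (y ! n))"

end

theory Submission
  imports Defs
begin

text \<open>Writing \<open>p_i = z_{w_i}\<close>, a transmission scattering sequence is an integer walk \<open>w\<close> with unit
  steps from \<open>-1\<close> to \<open>M+1\<close> whose inner entries lie in \<open>{0..M}\<close>.  A non-trunk run of indices with
  \<open>w_i \<ge> n\<close> ends with a step from \<open>n\<close> to \<open>n-1\<close>, and it has length at least 2 exactly when that
  step is preceded by \<open>n+1\<close>.  Hence \<open>k_n\<close> counts the descents \<open>n, n-1\<close> of \<open>w\<close> and \<open>m_n\<close> its
  double descents \<open>n+1, n, n-1\<close>.

  Apart from its last step, a walk to level \<open>M+1\<close> arises uniquely from a walk to level \<open>M\<close> by
  grafting, at the \<open>i\<close>-th of its \<open>k_M + 1\<close> visits to \<open>M\<close>, some number \<open>c_i\<close> of excursions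
  \<open>M, M+1, M\<close>.  This leaves all statistics below \<open>M\<close> unchanged, makes \<open>k_{M+1} = \<Sum> c_i\<close>, and
  creates one double descent through \<open>M\<close> for every \<open>i \<le> k_M\<close> with \<open>c_i > 0\<close>.  There are
  \<open>binom k_M m_M * binom k_{M+1} m_M\<close> such sequences \<open>c\<close>, and induction on \<open>M\<close> gives the product.\<close>

fun count_adj :: "('a \<Rightarrow> 'a \<Rightarrow> bool) \<Rightarrow> 'a list \<Rightarrow> nat" where
  "count_adj P (x # y # xs) = (if P x y then 1 else 0) + count_adj P (y # xs)"
| "count_adj P _ = 0"

fun count_adj3 :: "('a \<Rightarrow> 'a \<Rightarrow> 'a \<Rightarrow> bool) \<Rightarrow> 'a list \<Rightarrow> nat" where
  "count_adj3 P (x # y # z # xs) = (if P x y z then 1 else 0) + count_adj3 P (y # z # xs)"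
| "count_adj3 P _ = 0"

lemma count_adj_Cons:
  "count_adj P (u # xs) = (if xs \<noteq> [] \<and> P u (hd xs) then 1 else 0) + count_adj P xs"
  by (cases xs) auto

lemma count_adj3_Cons:
  "count_adj3 P (u # xs) = (if 2 \<le> length xs \<and> P u (xs ! 0) (xs ! 1) then 1 else 0) + count_adj3 P xs"
  by (cases xs; cases "tl xs") auto

lemma count_adj_snoc:
  "count_adj P (xs @ [y]) = count_adj P xs + (if xs \<noteq> [] \<and> P (last xs) y then 1 else 0)"
  by (induction xs rule: induct_list012) auto

lemma count_adj3_snoc:
  assumes "\<And>a b. \<not> P a b y"
  shows "count_adj3 P (xs @ [y]) = count_adj3 P xs"
  using assms
proof (induction xs rule: induct_list012)
  case (3 x y' zs)
  then show ?case by (cases zs) auto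
qed auto

lemma count_adj_eq_0:
  assumes "\<And>x y. x \<in> set xs \<Longrightarrow> \<not> P x y"
  shows "count_adj P xs = 0"
  using assms by (induction xs rule: induct_list012) auto

lemma count_adj3_eq_0:
  assumes "\<And>x y z. x \<in> set xs \<Longrightarrow> \<not> P x y z"
  shows "count_adj3 P xs = 0"
  using assms by (induction xs rule: induct_list012) (auto simp: count_adj3_Cons)

lemma count_adj3_pos: "P a b d \<Longrightarrow> count_adj3 P (xs @ a # b # d # ys) > 0"
  by (induction xs) (auto simp: count_adj3_Cons)

lemma count_adj_eq_card:
  "count_adj P xs = card {i. Suc i < length xs \<and> P (xs ! i) (xs ! Suc i)}"
proof (induction P xs rule: count_adj.induct)
  case (1 P x y xs)
  have "{i. Suc i < length (x # y # xs) \<and> P ((x # y # xs) ! i) ((x # y # xs) ! Suc i)} =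
      (if P x y then {0} else {}) \<union> Suc ` {i. Suc i < length (y # xs) \<and> P ((y # xs) ! i) ((y # xs) ! Suc i)}"
    by (rule set_eqI, rename_tac i, case_tac i) (simp_all add: inj_image_mem_iff)
  then show ?case using 1 by (simp add: card_image)
qed auto

lemma count_adj3_eq_card:
  "count_adj3 P xs = card {i. Suc (Suc i) < length xs \<and> P (xs ! i) (xs ! Suc i) (xs ! Suc (Suc i))}"
proof (induction P xs rule: count_adj3.induct)
  case (1 P x y z xs)
  let ?ys = "y # z # xs"
  have "{i. Suc (Suc i) < length (x # ?ys) \<and> P ((x # ?ys) ! i) ((x # ?ys) ! Suc i) ((x # ?ys) ! Suc (Suc i))} =
      (if P x y z then {0} else {}) \<union> Suc ` {i. Suc (Suc i) < length ?ys \<and> P (?ys ! i) (?ys ! Suc i) (?ys ! Suc (Suc i))}"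
    by (rule set_eqI, rename_tac i, case_tac i) (simp_all add: inj_image_mem_iff)
  then show ?case using 1 by (simp add: card_image)
qed auto

section \<open>Grafting excursions onto integer walks\<close>

definition zigzag :: "int \<Rightarrow> nat \<Rightarrow> int list" where
  "zigzag t j = concat (replicate j [t + 1, t])"

lemma zigzag_0 [simp]: "zigzag t 0 = []"
  by (simp add: zigzag_def)

lemma zigzag_Suc [simp]: "zigzag t (Suc j) = (t + 1) # t # zigzag t j"
  by (simp add: zigzag_def)

lemma last_Cons_zigzag: "last (t # zigzag t j) = t"
  by (induction j) auto

lemma set_zigzag: "set (zigzag t j) \<subseteq> {t, t + 1}"
  by (induction j) auto

text \<open>\<open>graft t xs c\<close> inserts \<open>c ! i\<close> excursions \<open>t+1, t\<close> after the \<open>i\<close>-th occurrence of \<open>t\<close>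
  in \<open>xs\<close>; it is meant for \<open>c\<close> with one entry per occurrence.\<close>

fun graft :: "int \<Rightarrow> int list \<Rightarrow> nat list \<Rightarrow> int list" where
  "graft t [] c = []"
| "graft t (x # xs) [] = x # graft t xs []"
| "graft t (x # xs) (j # c) =
     (if x = t then x # zigzag t j @ graft t xs c else x # graft t xs (j # c))"

lemma graft_Nil2 [simp]: "graft t xs [] = xs"
  by (induction xs) auto

lemma graft_Cons_other: "x \<noteq> t \<Longrightarrow> graft t (x # xs) c = x # graft t xs c"
  by (cases c) auto

lemma graft_eq_Nil_iff [simp]: "graft t xs c = [] \<longleftrightarrow> xs = []"
  by (cases xs; cases c) auto

lemma hd_graft: "xs \<noteq> [] \<Longrightarrow> hd (graft t xs c) = hd xs"
  by (cases xs; cases c) auto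

lemma last_graft: "xs \<noteq> [] \<Longrightarrow> last (graft t xs c) = last xs"
proof (induction t xs c rule: graft.induct)
  case (3 t x xs j c)
  then show ?case using last_Cons_zigzag[of t j]
    by (cases "x = t"; cases xs) (auto simp: last_append)
qed auto

lemma set_subset_graft: "set xs \<subseteq> set (graft t xs c)"
  by (induction t xs c rule: graft.induct) auto

lemma set_graft_subset: "set (graft t xs c) \<subseteq> set xs \<union> {t, t + 1}"
  by (induction t xs c rule: graft.induct) (auto dest: set_zigzag[THEN subsetD])

lemma set_tl_subset_graft: "set (tl xs) \<subseteq> set (tl (graft t xs c))"
  by (cases xs; cases c) (auto dest: set_subset_graft[THEN subsetD])

lemma set_tl_graft_subset: "set (tl (graft t xs c)) \<subseteq> set (tl xs) \<union> {t, t + 1}"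
  by (cases xs; cases c) (auto dest: set_graft_subset[THEN subsetD] set_zigzag[THEN subsetD])

text \<open>The statements about \<open>graft\<close> are proved for lists with a fixed head \<open>u\<close> first, so that the
  induction hypothesis sees the entry preceding the grafted part.\<close>

lemma successively_Cons_zigzag:
  "P t (t + 1) \<Longrightarrow> P (t + 1) t \<Longrightarrow> successively P (t # zigzag t j @ R) \<longleftrightarrow> successively P (t # R)"
  by (induction j) auto

lemma successively_Cons_graft:
  assumes "P t (t + 1)" "P (t + 1) t"
  shows "successively P (u # graft t xs c) \<longleftrightarrow> successively P (u # xs)"
  using assms
  by (induction t xs c arbitrary: u rule: graft.induct) (auto simp: successively_Cons_zigzag)

lemma successively_graft:
  assumes "P t (t + 1)" "P (t + 1) t"
  shows "successively P (graft t xs c) \<longleftrightarrow> successively P xs"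
  using assms
  by (cases xs; cases c) (auto simp: successively_Cons_graft successively_Cons_zigzag)

definition count_in_excursion :: "(int \<Rightarrow> int \<Rightarrow> bool) \<Rightarrow> int \<Rightarrow> nat" where
  "count_in_excursion P t = (if P t (t + 1) then 1 else 0) + (if P (t + 1) t then 1 else 0)"

lemma count_adj_Cons_zigzag:
  "count_adj P (t # zigzag t j @ R) = j * count_in_excursion P t + count_adj P (t # R)"
  by (induction j) (auto simp: count_in_excursion_def)

lemma count_adj_Cons_graft:
  "length c = count_list xs t \<Longrightarrow>
   count_adj P (u # graft t xs c) = count_adj P (u # xs) + sum_list c * count_in_excursion P t"
proof (induction t xs c arbitrary: u rule: graft.induct)
  case (3 t x xs j c)
  show ?case
  proof (cases "x = t")
    case True
    with 3 have "count_adj P (t # graft t xs c) = count_adj P (t # xs) + sum_list c * count_in_excursion P t"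
      by simp
    then show ?thesis using True count_adj_Cons_zigzag[of P t j "graft t xs c"]
      by (simp add: algebra_simps)
  next
    case False
    with 3 show ?thesis by simp
  qed
qed auto

lemma count_adj_graft:
  assumes "length c = count_list xs t"
  shows "count_adj P (graft t xs c) = count_adj P xs + sum_list c * count_in_excursion P t"
proof (cases xs)
  case (Cons x xs')
  show ?thesis
  proof (cases "x = t")
    case True
    then obtain j c' where "c = j # c'" "length c' = count_list xs' t"
      using assms Cons by (cases c) auto
    then show ?thesis
      using Cons True count_adj_Cons_graft[of c' xs' t P t] count_adj_Cons_zigzag[of P t j]
      by (simp add: algebra_simps)
  next
    case False
    then show ?thesis using Cons assms count_adj_Cons_graft[of c xs' t P x] by (simp add: graft_Cons_other)
  qed
qed (use assms in simp)

definition middle_avoids :: "(int \<Rightarrow> int \<Rightarrow> int \<Rightarrow> bool) \<Rightarrow> int \<Rightarrow> bool" where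
  "middle_avoids P t \<longleftrightarrow> (\<forall>a b d. P a b d \<longrightarrow> b \<noteq> t \<and> b \<noteq> t + 1)"

lemma count_adj3_Cons_middle_avoids:
  "middle_avoids P t \<Longrightarrow> b = t \<or> b = t + 1 \<Longrightarrow> count_adj3 P (a # b # R) = count_adj3 P (b # R)"
  by (cases R) (auto simp: middle_avoids_def)

lemma count_adj3_Cons_zigzag:
  "middle_avoids P t \<Longrightarrow> count_adj3 P (t # zigzag t j @ R) = count_adj3 P (t # R)"
  by (induction j) (auto simp: count_adj3_Cons_middle_avoids middle_avoids_def)

lemma count_adj3_Cons_graft:
  "middle_avoids P t \<Longrightarrow> count_adj3 P (u # graft t xs c) = count_adj3 P (u # xs)"
proof (induction t xs c arbitrary: u rule: graft.induct)
  case (3 t x xs j c)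
  show ?case
  proof (cases "x = t")
    case True
    then show ?thesis
      using 3 by (simp add: count_adj3_Cons_zigzag count_adj3_Cons_middle_avoids)
  next
    case False
    then show ?thesis
      using 3 by (cases xs) (auto simp: hd_graft count_adj3_Cons)
  qed
qed auto

lemma count_adj3_graft:
  assumes "middle_avoids P t"
  shows "count_adj3 P (graft t xs c) = count_adj3 P xs"
proof (cases xs)
  case (Cons x xs')
  then show ?thesis
    using assms by (cases "x = t"; cases c)
      (simp_all add: graft_Cons_other count_adj3_Cons_graft count_adj3_Cons_zigzag)
qed simp

fun strip_zigzag :: "int \<Rightarrow> int list \<Rightarrow> nat \<times> int list" where
  "strip_zigzag t (a # b # xs) =
     (if a = t + 1 \<and> b = t then (Suc (fst (strip_zigzag t xs)), snd (strip_zigzag t xs))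
      else (0, a # b # xs))"
| "strip_zigzag t xs = (0, xs)"

lemma length_snd_strip_zigzag: "length (snd (strip_zigzag t xs)) \<le> length xs"
  by (induction t xs rule: strip_zigzag.induct) auto

lemma zigzag_strip_zigzag: "zigzag t (fst (strip_zigzag t xs)) @ snd (strip_zigzag t xs) = xs"
  by (induction t xs rule: strip_zigzag.induct) auto

lemma snd_strip_zigzag_not_zigzag: "snd (strip_zigzag t xs) \<noteq> (t + 1) # t # r"
  by (induction t xs rule: strip_zigzag.induct) (auto split: if_splits)

lemma strip_zigzag_zigzag:
  "(\<And>r. R \<noteq> (t + 1) # t # r) \<Longrightarrow> strip_zigzag t (zigzag t j @ R) = (j, R)"
proof (induction j)
  case 0
  then show ?case by (cases R; cases "tl R") auto
qed auto

text \<open>The inverse of \<open>graft\<close>: every run of excursions \<open>t+1, t\<close> following an occurrence of \<open>t\<close>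
  is removed and its length recorded.\<close>

function ungraft :: "int \<Rightarrow> int list \<Rightarrow> int list \<times> nat list" where
  "ungraft t [] = ([], [])"
| "ungraft t (x # xs) =
     (if x = t
      then (t # fst (ungraft t (snd (strip_zigzag t xs))),
            fst (strip_zigzag t xs) # snd (ungraft t (snd (strip_zigzag t xs))))
      else (x # fst (ungraft t xs), snd (ungraft t xs)))"
  by pat_completeness auto
termination
  by (relation "measure (\<lambda>(t, xs). length xs)") (auto simp: le_imp_less_Suc length_snd_strip_zigzag)

lemma graft_ungraft: "graft t (fst (ungraft t xs)) (snd (ungraft t xs)) = xs"
proof (induction t xs rule: ungraft.induct)
  case (2 t x xs)
  then show ?case using zigzag_strip_zigzag[of t xs] by (cases "x = t") (simp_all add: graft_Cons_other)
qed simp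

lemma length_snd_ungraft: "length (snd (ungraft t xs)) = count_list (fst (ungraft t xs)) t"
  by (induction t xs rule: ungraft.induct) auto

lemma fst_ungraft_eq_Nil_iff: "fst (ungraft t xs) = [] \<longleftrightarrow> xs = []"
  by (cases xs) auto

lemma hd_fst_ungraft: "xs \<noteq> [] \<Longrightarrow> hd (fst (ungraft t xs)) = hd xs"
  by (cases xs) auto

lemma fst_ungraft_Cons_Cons: "a \<noteq> t \<Longrightarrow> \<exists>r. fst (ungraft t (a # b # xs)) = a # b # r"
  by (cases "b = t") auto

definition excursion_at :: "int \<Rightarrow> int \<Rightarrow> int \<Rightarrow> int \<Rightarrow> bool" where
  "excursion_at t a b d \<longleftrightarrow> a = t \<and> b = t + 1 \<and> d = t"

lemma count_adj3_excursion_ungraft: "count_adj3 (excursion_at t) (fst (ungraft t xs)) = 0"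
proof (induction t xs rule: ungraft.induct)
  case (2 t x xs)
  show ?case
  proof (cases "x = t")
    case True
    define r where "r = snd (strip_zigzag t xs)"
    have "\<not> (fst (ungraft t r)) ! 0 = t + 1 \<or> \<not> (fst (ungraft t r)) ! 1 = t"
      if long: "2 \<le> length (fst (ungraft t r))"
    proof -
      obtain a r' where r: "r = a # r'" using long by (cases r) auto
      show ?thesis
      proof (cases "a = t")
        case True
        then show ?thesis using r by simp
      next
        case False
        then obtain b r'' where r': "r' = b # r''" using long r by (cases r') auto
        have "a = t + 1 \<Longrightarrow> b \<noteq> t"
          using snd_strip_zigzag_not_zigzag[of t xs r''] r r' by (auto simp: r_def)
        then show ?thesis using fst_ungraft_Cons_Cons[OF False, of b r''] r r' by auto
      qed
    qed
    then show ?thesis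
      using "2.IH"(1) True by (simp add: r_def count_adj3_Cons excursion_at_def)
  next
    case False
    then show ?thesis
      using "2.IH"(3)[OF False] False by (simp add: count_adj3_Cons excursion_at_def)
  qed
qed simp

lemma ungraft_graft:
  "count_adj (\<lambda>a b. a = t + 1 \<and> b = t) xs = 0 \<Longrightarrow> length c = count_list xs t \<Longrightarrow>
   ungraft t (graft t xs c) = (xs, c)"
proof (induction xs arbitrary: c)
  case (Cons x xs)
  have no_pair: "count_adj (\<lambda>a b. a = t + 1 \<and> b = t) xs = 0"
    using Cons.prems(1) by (simp add: count_adj_Cons)
  show ?case
  proof (cases "x = t")
    case True
    then obtain j c' where c: "c = j # c'" and len: "length c' = count_list xs t"
      using Cons.prems(2) by (cases c) auto
    have "graft t xs c' \<noteq> (t + 1) # t # r" for r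
    proof
      assume *: "graft t xs c' = (t + 1) # t # r"
      then obtain ys where xs: "xs = (t + 1) # ys"
        using hd_graft[of xs t c'] by (cases xs) auto
      then have "graft t ys c' = t # r" using * by (simp add: graft_Cons_other)
      then have "ys \<noteq> [] \<and> hd ys = t" using hd_graft[of ys t c'] by (cases ys) auto
      then show False using no_pair xs by (cases ys) auto
    qed
    then show ?thesis using True c strip_zigzag_zigzag Cons.IH[OF no_pair len] by simp
  next
    case False
    then show ?thesis using Cons.IH[OF no_pair] Cons.prems(2) by (simp add: graft_Cons_other)
  qed
qed simp

abbreviation unit_step :: "int \<Rightarrow> int \<Rightarrow> bool" where
  "unit_step a b \<equiv> \<bar>a - b\<bar> = 1"

definition descents :: "int \<Rightarrow> int list \<Rightarrow> nat" where
  "descents n xs = count_adj (\<lambda>a b. a = n \<and> b = n - 1) xs"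

definition double_descent :: "int \<Rightarrow> int \<Rightarrow> int \<Rightarrow> int \<Rightarrow> bool" where
  "double_descent n a b d \<longleftrightarrow> a = n + 1 \<and> b = n \<and> d = n - 1"

definition double_descents :: "int \<Rightarrow> int list \<Rightarrow> nat" where
  "double_descents n xs = count_adj3 (double_descent n) xs"

definition capped_walk :: "int \<Rightarrow> int list \<Rightarrow> bool" where
  "capped_walk t xs \<longleftrightarrow> xs \<noteq> [] \<and> last xs = t \<and> set xs \<subseteq> {..t} \<and> successively unit_step xs"

lemma capped_walk_Cons:
  assumes "capped_walk t (x # xs)" "xs \<noteq> []"
  shows "capped_walk t xs" "unit_step x (hd xs)" "x \<le> t" "hd xs \<le> t"
proof -
  have "set (x # xs) \<subseteq> {..t}" using assms(1) by (simp add: capped_walk_def)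
  then show "hd xs \<le> t" using hd_in_set[OF assms(2)] by auto
qed (use assms in \<open>auto simp: capped_walk_def successively_Cons\<close>)

text \<open>Every visit to the maximum \<open>t\<close> except the last one is followed by a descent.\<close>

lemma count_list_capped_walk: "capped_walk t xs \<Longrightarrow> count_list xs t = descents t xs + 1"
proof (induction xs)
  case (Cons x xs)
  show ?case
  proof (cases "xs = []")
    case True
    then show ?thesis using Cons.prems by (simp add: capped_walk_def descents_def)
  next
    case False
    note step = capped_walk_Cons[OF Cons.prems False]
    then have "x = t \<longrightarrow> hd xs = t - 1" by auto
    then show ?thesis using Cons.IH[OF step(1)] False by (simp add: descents_def count_adj_Cons)
  qed
qed (simp add: capped_walk_def)

lemma double_descents_Cons: "u \<noteq> t + 1 \<Longrightarrow> double_descents t (u # xs) = double_descents t xs"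
  by (cases xs; cases "tl xs") (auto simp: double_descents_def double_descent_def)

lemma double_descents_zigzag:
  "double_descents t (zigzag t j @ R) =
     double_descents t R + (if 0 < j \<and> R \<noteq> [] \<and> hd R = t - 1 then 1 else 0)"
proof (induction j)
  case (Suc j)
  have "double_descents t (zigzag t (Suc j) @ R) =
      (if zigzag t j @ R \<noteq> [] \<and> hd (zigzag t j @ R) = t - 1 then 1 else 0)
      + double_descents t (t # zigzag t j @ R)"
    by (cases "zigzag t j @ R") (auto simp: double_descents_def double_descent_def)
  then show ?case using Suc by (cases j) (auto simp: double_descents_Cons)
qed simp

lemma double_descents_graft:
  "capped_walk t xs \<Longrightarrow> length c = count_list xs t \<Longrightarrow>
   double_descents t (graft t xs c) = length (filter ((<) 0) (butlast c))"
proof (induction xs arbitrary: c)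
  case (Cons x xs)
  show ?case
  proof (cases "x = t")
    case False
    then have ne: "xs \<noteq> []" using Cons.prems by (auto simp: capped_walk_def)
    note step = capped_walk_Cons[OF Cons.prems(1) ne]
    then show ?thesis
      using False Cons.IH[OF step(1)] Cons.prems(2) by (simp add: graft_Cons_other double_descents_Cons)
  next
    case True
    then obtain j c' where c: "c = j # c'" and len: "length c' = count_list xs t"
      using Cons.prems(2) by (cases c) auto
    show ?thesis
    proof (cases "xs = []")
      case True
      then show ?thesis
        using c len \<open>x = t\<close> double_descents_zigzag[of t j "[]"] double_descents_Cons[of t t]
        by (simp add: double_descents_def)
    next
      case False
      note step = capped_walk_Cons[OF Cons.prems(1) False]
      have hd: "hd (graft t xs c') = t - 1" using step \<open>x = t\<close> hd_graft[OF False] by auto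
      have "t \<in> set xs" using step(1) last_in_set[OF False] by (simp add: capped_walk_def)
      then have "c' \<noteq> []" using len by (auto simp: count_list_0_iff)
      then show ?thesis
        using Cons.IH[OF step(1) len] c \<open>x = t\<close> False hd double_descents_zigzag[of t j "graft t xs c'"]
        by (cases c') (simp_all add: double_descents_Cons)
    qed
  qed
qed (simp add: capped_walk_def)

text \<open>The integer walks \<open>B @ [T + 1]\<close> with \<open>path_to T B\<close> are the index sequences of transmission
  scattering sequences with \<open>M = T\<close>.\<close>

definition path_to :: "int \<Rightarrow> int list \<Rightarrow> bool" where
  "path_to T B \<longleftrightarrow> B \<noteq> [] \<and> hd B = -1 \<and> last B = T \<and> successively unit_step B \<and> set (tl B) \<subseteq> {0..T}"

lemma set_path_to: "path_to T B \<Longrightarrow> T \<ge> -1 \<Longrightarrow> set B \<subseteq> {-1..T}"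
  by (cases B) (auto simp: path_to_def)

lemma capped_walk_path_to: "path_to T B \<Longrightarrow> T \<ge> -1 \<Longrightarrow> capped_walk T B"
  using set_path_to[of T B] by (auto simp: path_to_def capped_walk_def)

lemma path_to_0_iff: "path_to 0 B \<longleftrightarrow> B = [-1, 0]"
proof
  assume B: "path_to 0 B"
  then obtain r where r: "B = -1 # r" "set r \<subseteq> {0}" "last (-1 # r) = 0" "successively unit_step (-1 # r)"
    by (cases B) (auto simp: path_to_def)
  then obtain r' where "r = 0 # r'" by (cases r) auto
  moreover have "r' = []" using r \<open>r = 0 # r'\<close> by (cases r') auto
  ultimately show "B = [-1, 0]" using r by simp
qed (auto simp: path_to_def)

section \<open>Raising the maximum of a path by one\<close>

definition raise :: "int \<Rightarrow> int list \<Rightarrow> nat list \<Rightarrow> int list" where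
  "raise t B c = graft t B c @ [t + 1]"

definition paths_with_stats :: "nat \<Rightarrow> nat list \<Rightarrow> nat list \<Rightarrow> int list set" where
  "paths_with_stats M k m =
     {B. path_to (int M) B \<and> (\<forall>n\<le>M. descents (int n) B = k ! n \<and> double_descents (int n) B = m ! n)}"

definition compositions :: "nat \<Rightarrow> nat \<Rightarrow> nat \<Rightarrow> nat list set" where
  "compositions a s b =
     {c. length c = Suc a \<and> sum_list c = s \<and> length (filter ((<) 0) (butlast c)) = b}"

locale raise_step =
  fixes M :: nat and B :: "int list" and c :: "nat list"
  assumes path: "path_to (int M) B" and length_c: "length c = count_list B (int M)"
begin

lemma set_B: "set B \<subseteq> {-1..int M}"
  using set_path_to[OF path] by simp

lemma capped: "capped_walk (int M) B"
  using capped_walk_path_to[OF path] by simp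

lemma path_to_raise: "path_to (int M + 1) (raise (int M) B c)"
proof -
  have ne: "B \<noteq> []" and hd: "hd B = -1" and last: "last B = int M"
    and steps: "successively unit_step B" and tl: "set (tl B) \<subseteq> {0..int M}"
    using path by (auto simp: path_to_def)
  have "set (tl (graft (int M) B c)) \<subseteq> {0..int M + 1}"
    using tl set_tl_graft_subset[of "int M" B c] by fastforce
  then show ?thesis
    using ne hd last steps last_graft[OF ne] hd_graft[OF ne] successively_graft[where P = unit_step and t = "int M"]
    by (auto simp: path_to_def raise_def successively_append_iff hd_append)
qed

lemma descents_raise: "n \<le> M \<Longrightarrow> descents (int n) (raise (int M) B c) = descents (int n) B"
  using count_adj_graft[OF length_c, of "\<lambda>a b. a = int n \<and> b = int n - 1"]
  by (simp add: descents_def raise_def count_adj_snoc count_in_excursion_def)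

lemma descents_raise_top: "descents (int (Suc M)) (raise (int M) B c) = sum_list c"
proof -
  have Suc: "int (Suc M) = int M + 1" by simp
  have "descents (int M + 1) B = 0"
    using set_B unfolding descents_def by (intro count_adj_eq_0) auto
  then show ?thesis
    using count_adj_graft[OF length_c, of "\<lambda>a b. a = int M + 1 \<and> b = int M"]
    unfolding Suc by (simp add: descents_def raise_def count_adj_snoc count_in_excursion_def)
qed

lemma double_descents_raise_below: "n < M \<Longrightarrow> double_descents (int n) (raise (int M) B c) = double_descents (int n) B"
  unfolding double_descents_def raise_def
  by (subst count_adj3_snoc)
     (auto simp: double_descent_def middle_avoids_def count_adj3_graft)

lemma double_descents_raise_top:
  "double_descents (int M) (raise (int M) B c) = length (filter ((<) 0) (butlast c))"
  using double_descents_graft[OF capped length_c] unfolding raise_def double_descents_def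
  by (subst count_adj3_snoc) (auto simp: double_descent_def)

lemma double_descents_raise_above: "double_descents (int (Suc M)) (raise (int M) B c) = 0"
proof -
  have "set (raise (int M) B c) \<subseteq> {-1..int M + 1}"
    using set_path_to[OF path_to_raise] by simp
  then show ?thesis unfolding double_descents_def by (intro count_adj3_eq_0) (auto simp: double_descent_def)
qed

lemma double_descents_top: "double_descents (int M) B = 0"
  using set_B unfolding double_descents_def by (intro count_adj3_eq_0) (auto simp: double_descent_def)

lemma length_c_eq: "length c = Suc (descents (int M) B)"
  using count_list_capped_walk[OF capped] length_c by simp

lemma ungraft_raise: "ungraft (int M) (butlast (raise (int M) B c)) = (B, c)"
proof -
  have "count_adj (\<lambda>a b. a = int M + 1 \<and> b = int M) B = 0"
    using set_B by (intro count_adj_eq_0) auto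
  then show ?thesis using ungraft_graft[OF _ length_c] by (simp add: raise_def)
qed

lemma raise_stats_iff:
  assumes "m ! Suc M = 0" "M \<le> length m"
  shows "(\<forall>n\<le>M. descents (int n) B = k ! n \<and> double_descents (int n) B = (take M m @ [0]) ! n)
           \<and> c \<in> compositions (k ! M) (k ! Suc M) (m ! M)
         \<longleftrightarrow> (\<forall>n\<le>Suc M. descents (int n) (raise (int M) B c) = k ! n
                          \<and> double_descents (int n) (raise (int M) B c) = m ! n)"
proof -
  have m': "n \<le> M \<Longrightarrow> (take M m @ [0]) ! n = (if n < M then m ! n else 0)" for n
    using assms(2) by (auto simp: nth_append)
  show ?thesis
    unfolding compositions_def mem_Collect_eq
    using assms(1) m' descents_raise descents_raise_top double_descents_raise_below double_descents_raise_top
      double_descents_raise_above double_descents_top length_c_eq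
    by (smt (verit) le_eq_less_or_eq less_Suc_eq_le)
qed

end

lemma raise_step_if_mem:
  assumes "(B, c) \<in> paths_with_stats M k m \<times> compositions (k ! M) s b"
  shows "raise_step M B c"
proof
  show path: "path_to (int M) B" using assms by (simp add: paths_with_stats_def)
  show "length c = count_list B (int M)"
    using assms count_list_capped_walk[OF capped_walk_path_to[OF path]]
    by (simp add: paths_with_stats_def compositions_def)
qed

lemma top_not_in_walk:
  fixes t :: int
  assumes steps: "successively unit_step B" and bound: "set B \<subseteq> {..t + 1}"
    and ends: "hd B \<noteq> t + 1" "last B \<noteq> t + 1"
    and no_excursion: "count_adj3 (excursion_at t) B = 0"
  shows "t + 1 \<notin> set B"
proof
  assume "t + 1 \<in> set B"
  then obtain ys zs where B: "B = ys @ (t + 1) # zs" by (meson split_list)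
  have ne: "ys \<noteq> []" "zs \<noteq> []" using B ends by auto
  have "unit_step (last ys) (t + 1)" "unit_step (t + 1) (hd zs)"
    using steps ne unfolding B by (auto simp: successively_append_iff successively_Cons)
  moreover have "last ys \<in> set B" "hd zs \<in> set B" using B ne by auto
  then have "last ys \<le> t + 1" "hd zs \<le> t + 1" using bound by auto
  ultimately have "last ys = t" "hd zs = t" by auto
  then have "B = butlast ys @ t # (t + 1) # t # tl zs"
    using B ne by (metis append.assoc append_Cons append_butlast_last_id append_self_conv2 list.collapse)
  moreover have "excursion_at t t (t + 1) t" by (simp add: excursion_at_def)
  ultimately show False
    using no_excursion count_adj3_pos[of "excursion_at t" t "t + 1" t "butlast ys" "tl zs"] by simp
qed

lemma butlast_path_to_Suc:
  fixes t :: int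
  assumes path: "path_to (t + 1) P" and "0 \<le> t"
  shows "P = butlast P @ [t + 1]" "butlast P \<noteq> []" "hd (butlast P) = -1" "last (butlast P) = t"
    "successively unit_step (butlast P)" "set (tl (butlast P)) \<subseteq> {0..t + 1}"
proof -
  have P_ne: "P \<noteq> []" and hd_P: "hd P = -1" and last_P: "last P = t + 1"
    and steps_P: "successively unit_step P" and tl_P: "set (tl P) \<subseteq> {0..t + 1}"
    using path by (auto simp: path_to_def)
  show P: "P = butlast P @ [t + 1]" using append_butlast_last_id[OF P_ne] last_P by simp
  show ne: "butlast P \<noteq> []" using P hd_P \<open>0 \<le> t\<close> by (cases "butlast P") auto
  show "hd (butlast P) = -1" using hd_append2[OF ne, of "[t + 1]"] P[symmetric] hd_P by simp
  show "set (tl (butlast P)) \<subseteq> {0..t + 1}"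
    using tl_P by (auto simp flip: butlast_tl dest: in_set_butlastD)
  have "successively unit_step (butlast P @ [t + 1])" using P[symmetric] steps_P by simp
  then have steps: "successively unit_step (butlast P)" and step_last: "unit_step (last (butlast P)) (t + 1)"
    using ne by (simp_all add: successively_append_iff)
  show "successively unit_step (butlast P)" by (fact steps)
  have "last (butlast P) \<le> t + 1"
    using set_path_to[OF path] \<open>0 \<le> t\<close> last_in_set[OF ne] in_set_butlastD by fastforce
  then show "last (butlast P) = t" using step_last by auto
qed
lemma path_to_Suc_obtain_raise:
  assumes "path_to (int M + 1) P"
  obtains B c where "raise_step M B c" "P = raise (int M) B c"
proof -
  let ?t = "int M"
  define B where "B = fst (ungraft ?t (butlast P))"
  define c where "c = snd (ungraft ?t (butlast P))"
  note P = butlast_path_to_Suc[OF assms of_nat_0_le_iff]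
  have graft: "graft ?t B c = butlast P" using graft_ungraft by (simp add: B_def c_def)
  have B_ne: "B \<noteq> []" using P(2) by (simp add: B_def fst_ungraft_eq_Nil_iff)
  have hd_B: "hd B = -1" using hd_fst_ungraft[OF P(2), of ?t] P(3) by (simp add: B_def)
  have last_B: "last B = ?t" using last_graft[OF B_ne, of ?t c] graft P(4) by simp
  have steps_B: "successively unit_step B"
    using P(5) unfolding graft[symmetric] by (simp add: successively_graft)
  have "set (tl B) \<subseteq> {0..?t + 1}"
    using set_tl_subset_graft[of B ?t c] graft P(6) by auto
  moreover have "set B \<subseteq> {..?t + 1}"
    using B_ne hd_B calculation by (cases B) auto
  then have "?t + 1 \<notin> set B"
    using top_not_in_walk[OF steps_B] hd_B last_B count_adj3_excursion_ungraft by (simp add: B_def)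
  moreover have "set (tl B) \<subseteq> set B" by (cases B) auto
  ultimately have "set (tl B) \<subseteq> {0..?t + 1} - {?t + 1}" by blast
  then have "raise_step M B c"
    using B_ne hd_B last_B steps_B length_snd_ungraft
    by unfold_locales (auto simp: path_to_def B_def c_def)
  moreover have "P = raise ?t B c" using graft P(1) by (simp add: raise_def)
  ultimately show thesis using that by blast
qed

lemma bij_betw_raise:
  assumes "m ! Suc M = 0" "M \<le> length m"
  shows "bij_betw (\<lambda>(B, c). raise (int M) B c)
     (paths_with_stats M k (take M m @ [0]) \<times> compositions (k ! M) (k ! Suc M) (m ! M))
     (paths_with_stats (Suc M) k m)"
proof (rule bij_betwI')
  fix x y
  assume x: "x \<in> paths_with_stats M k (take M m @ [0]) \<times> compositions (k ! M) (k ! Suc M) (m ! M)"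
    and y: "y \<in> paths_with_stats M k (take M m @ [0]) \<times> compositions (k ! M) (k ! Suc M) (m ! M)"
  obtain B c B' c' where xy: "x = (B, c)" "y = (B', c')" by (cases x, cases y)
  have "raise_step M B c" "raise_step M B' c'" using x y xy raise_step_if_mem by blast+
  then show "((\<lambda>(B, c). raise (int M) B c) x = (\<lambda>(B, c). raise (int M) B c) y) = (x = y)"
    using raise_step.ungraft_raise xy by (metis old.prod.case)
next
  fix x
  assume x: "x \<in> paths_with_stats M k (take M m @ [0]) \<times> compositions (k ! M) (k ! Suc M) (m ! M)"
  obtain B c where xB: "x = (B, c)" by (cases x)
  then interpret raise_step M B c using x raise_step_if_mem by blast
  have "\<forall>n\<le>M. descents (int n) B = k ! n \<and> double_descents (int n) B = (take M m @ [0]) ! n"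
    "c \<in> compositions (k ! M) (k ! Suc M) (m ! M)"
    using x xB by (auto simp: paths_with_stats_def)
  then have "\<forall>n\<le>Suc M. descents (int n) (raise (int M) B c) = k ! n
               \<and> double_descents (int n) (raise (int M) B c) = m ! n"
    using raise_stats_iff[OF assms] by blast
  then show "(\<lambda>(B, c). raise (int M) B c) x \<in> paths_with_stats (Suc M) k m"
    using path_to_raise xB by (simp add: paths_with_stats_def add.commute)
next
  fix P
  assume P: "P \<in> paths_with_stats (Suc M) k m"
  then have "path_to (int M + 1) P" by (simp add: paths_with_stats_def add.commute)
  then obtain B c where step: "raise_step M B c" and P_eq: "P = raise (int M) B c"
    by (rule path_to_Suc_obtain_raise)
  interpret raise_step M B c by (fact step)
  have "\<forall>n\<le>Suc M. descents (int n) (raise (int M) B c) = k ! n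
          \<and> double_descents (int n) (raise (int M) B c) = m ! n"
    using P P_eq by (simp add: paths_with_stats_def)
  then have "(B, c) \<in> paths_with_stats M k (take M m @ [0]) \<times> compositions (k ! M) (k ! Suc M) (m ! M)"
    using raise_stats_iff[OF assms] path by (simp add: paths_with_stats_def)
  then show "\<exists>x\<in>paths_with_stats M k (take M m @ [0]) \<times> compositions (k ! M) (k ! Suc M) (m ! M).
      P = (\<lambda>(B, c). raise (int M) B c) x"
    using P_eq by force
qed

section \<open>Counting compositions\<close>

lemma sum_lessThan_choose: "(\<Sum>y<s. y choose b) = s choose Suc b"
  by (induction s) auto

lemma sum_choose_diff: "(\<Sum>x\<in>{1..s}. (s - x) choose b) = s choose Suc b"
proof -
  have "(\<Sum>x\<in>{1..s}. (s - x) choose b) = (\<Sum>y<s. y choose b)"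
    by (rule sum.reindex_bij_witness[of _ "\<lambda>y. s - y" "\<lambda>x. s - x"]) auto
  then show ?thesis using sum_lessThan_choose by simp
qed

lemma finite_compositions: "finite (compositions a s b)"
proof (rule finite_subset)
  show "compositions a s b \<subseteq> {c. set c \<subseteq> {0..s} \<and> length c = Suc a}"
    using member_le_sum_list by (fastforce simp: compositions_def)
qed (rule finite_lists_length_eq, simp)

lemma compositions_0: "compositions 0 s b = (if b = 0 then {[s]} else {})"
proof -
  have "c \<in> compositions 0 s b \<longleftrightarrow> b = 0 \<and> c = [s]" for c
    by (cases c) (auto simp: compositions_def)
  then show ?thesis by auto
qed

lemma compositions_Suc_0: "compositions (Suc a) s 0 = Cons 0 ` compositions a s 0"
proof -
  have "c \<in> compositions (Suc a) s 0 \<longleftrightarrow> (\<exists>c'. c = 0 # c' \<and> c' \<in> compositions a s 0)" for c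
    by (cases c; cases "tl c") (auto simp: compositions_def)
  then show ?thesis by auto
qed

lemma compositions_Suc_Suc:
  "compositions (Suc a) s (Suc b) =
     Cons 0 ` compositions a s (Suc b) \<union> (\<lambda>(x, c). x # c) ` (SIGMA x:{1..s}. compositions a (s - x) b)"
proof -
  have "c \<in> compositions (Suc a) s (Suc b) \<longleftrightarrow>
      (\<exists>c'. c = 0 # c' \<and> c' \<in> compositions a s (Suc b)) \<or>
      (\<exists>x c'. c = x # c' \<and> x \<in> {1..s} \<and> c' \<in> compositions a (s - x) b)" for c
    by (cases c; cases "tl c") (auto simp: compositions_def)
  then show ?thesis by (intro set_eqI) (force simp: image_iff)
qed

lemma card_compositions: "card (compositions a s b) = (a choose b) * (s choose b)"
proof (induction a arbitrary: s b)
  case 0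
  then show ?case by (cases b) (auto simp: compositions_0)
next
  case (Suc a)
  show ?case
  proof (cases b)
    case 0
    then show ?thesis using Suc compositions_Suc_0 by (simp add: card_image)
  next
    case (Suc b')
    let ?S = "SIGMA x:{1..s}. compositions a (s - x) b'"
    have inj: "inj_on (\<lambda>(x, c). x # c) ?S"
      by (auto simp: inj_on_def)
    have "card (compositions (Suc a) s b) =
        card (Cons 0 ` compositions a s (Suc b')) + card ((\<lambda>(x, c). x # c) ` ?S)"
      unfolding Suc compositions_Suc_Suc by (rule card_Un_disjoint) (auto simp: finite_compositions)
    also have "\<dots> = card (compositions a s (Suc b')) + (\<Sum>x\<in>{1..s}. card (compositions a (s - x) b'))"
      by (subst card_image[OF inj], subst card_SigmaI) (auto simp: finite_compositions card_image)
    also have "\<dots> = (a choose Suc b') * (s choose Suc b') + (a choose b') * (\<Sum>x\<in>{1..s}. (s - x) choose b')"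
      using Suc.IH by (simp add: sum_distrib_left)
    also have "\<dots> = (Suc a choose b) * (s choose b)"
      using sum_choose_diff[of s b'] Suc by (simp add: algebra_simps)
    finally show ?thesis .
  qed
qed

lemma binom_vec_eq_lessThan:
  "binom_vec M x y = (\<Prod>n<M. x ! n choose y ! n) * (x ! M choose y ! M)"
  unfolding binom_vec_def lessThan_Suc_atMost[symmetric] by (simp add: mult.commute)

lemma ktilde_nth: "n < length k \<Longrightarrow> ktilde k ! n = (if Suc n < length k then k ! Suc n else 0)"
  by (cases k) (auto simp: ktilde_def nth_append)

lemma paths_with_stats_0: "k ! 0 = 0 \<Longrightarrow> m ! 0 = 0 \<Longrightarrow> paths_with_stats 0 k m = {[-1, 0]}"
  by (auto simp: paths_with_stats_def path_to_0_iff descents_def double_descents_def)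

lemma paths_with_stats_take: "paths_with_stats M (take (Suc M) k) m = paths_with_stats M k m"
  by (simp add: paths_with_stats_def)

lemma card_paths_with_stats:
  assumes "length k = Suc M" "length m = Suc M" "k ! 0 = 0"
    and "\<forall>n\<le>M. m ! n \<le> min (k ! n) (ktilde k ! n)"
  shows "card (paths_with_stats M k m) = binom_vec M k m * binom_vec M (ktilde k) m"
  using assms
proof (induction M arbitrary: k m)
  case 0
  then have "m ! 0 = 0" and "ktilde k = [0]" by (auto simp: ktilde_def length_Suc_conv)
  then show ?case using 0 paths_with_stats_0 by (simp add: binom_vec_def)
next
  case (Suc M)
  define k' where "k' = take (Suc M) k"
  define m' where "m' = take M m @ [0]"
  have k': "n \<le> M \<Longrightarrow> k' ! n = k ! n" for n by (simp add: k'_def)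
  have m': "n \<le> M \<Longrightarrow> m' ! n = (if n < M then m ! n else 0)" for n
    using Suc.prems(2) by (auto simp: m'_def nth_append)
  have kt: "n \<le> Suc M \<Longrightarrow> ktilde k ! n = (if n < Suc M then k ! Suc n else 0)" for n
    using ktilde_nth[of n k] Suc.prems(1) by simp
  have kt': "n \<le> M \<Longrightarrow> ktilde k' ! n = (if n < M then k ! Suc n else 0)" for n
    using ktilde_nth[of n k'] Suc.prems(1) by (simp add: k'_def)
  have m_top: "m ! Suc M = 0" using Suc.prems(4) kt[of "Suc M"] by auto
  have "m' ! n \<le> min (k' ! n) (ktilde k' ! n)" if "n \<le> M" for n
    using Suc.prems(4)[rule_format, of n] that k' m' kt kt' by auto
  then have IH: "card (paths_with_stats M k' m') = binom_vec M k' m' * binom_vec M (ktilde k') m'"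
    using Suc.IH[of k' m'] Suc.prems(1-3) k'[of 0] by (simp add: k'_def m'_def)
  have "card (paths_with_stats (Suc M) k m) =
      card (paths_with_stats M k m') * card (compositions (k ! M) (k ! Suc M) (m ! M))"
    using bij_betw_same_card[OF bij_betw_raise[OF m_top]] Suc.prems(2)
    by (simp add: m'_def card_cartesian_product)
  also have "\<dots> = binom_vec M k' m' * binom_vec M (ktilde k') m' * ((k ! M choose m ! M) * (k ! Suc M choose m ! M))"
    using IH card_compositions paths_with_stats_take by (simp add: k'_def)
  also have "\<dots> = binom_vec (Suc M) k m * binom_vec (Suc M) (ktilde k) m"
  proof -
    have "(\<Prod>n<M. k' ! n choose m' ! n) = (\<Prod>n<M. k ! n choose m ! n)"
      "(\<Prod>n<M. ktilde k' ! n choose m' ! n) = (\<Prod>n<M. ktilde k ! n choose m ! n)"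
      by (simp_all add: k' m' kt kt')
    then show ?thesis
      using m' kt m_top unfolding binom_vec_eq_lessThan prod.lessThan_Suc by simp
  qed
  finally show ?case .
qed

section \<open>Transmission scattering sequences as integer walks\<close>

lemma all_inner_nth_iff:
  "(\<forall>i. 1 \<le> i \<and> i + 2 \<le> length xs \<longrightarrow> xs ! i \<in> A) \<longleftrightarrow> set (butlast (tl xs)) \<subseteq> A"
proof
  assume H: "\<forall>i. 1 \<le> i \<and> i + 2 \<le> length xs \<longrightarrow> xs ! i \<in> A"
  show "set (butlast (tl xs)) \<subseteq> A"
  proof
    fix x assume "x \<in> set (butlast (tl xs))"
    then obtain j where "Suc (Suc j) < length xs" "x = xs ! Suc j"
      by (force simp: in_set_conv_nth nth_butlast nth_tl)
    then show "x \<in> A" using H by auto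
  qed
next
  assume H: "set (butlast (tl xs)) \<subseteq> A"
  show "\<forall>i. 1 \<le> i \<and> i + 2 \<le> length xs \<longrightarrow> xs ! i \<in> A"
  proof (intro allI impI)
    fix i assume i: "1 \<le> i \<and> i + 2 \<le> length xs"
    then have "xs ! i = butlast (tl xs) ! (i - 1)" "i - 1 < length (butlast (tl xs))"
      by (auto simp: nth_butlast nth_tl)
    then show "xs ! i \<in> A" using H nth_mem by fastforce
  qed
qed

lemma trans_seq_iff:
  "trans_seq z M p \<longleftrightarrow> p \<noteq> [] \<and> hd p = z (-1) \<and> last p = z (int M + 1)
     \<and> set (butlast (tl p)) \<subseteq> z ` {0..int M}
     \<and> successively (\<lambda>x y. \<exists>j\<in>{-1..int M}. {x, y} = {z j, z (j + 1)}) p"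
  unfolding trans_seq_def all_inner_nth_iff successively_conv_nth
  by (auto simp: hd_conv_nth last_conv_nth)

lemma set_subset_hd_last_inner: "set xs \<subseteq> insert (hd xs) (insert (last xs) (set (butlast (tl xs))))"
  by (cases xs; cases "tl xs" rule: rev_cases) auto

lemma doubleton_image_eq_iff:
  fixes a b :: int
  assumes "inj_on z {-1..int M + 1}" "a \<in> {-1..int M + 1}" "b \<in> {-1..int M + 1}"
  shows "(\<exists>j\<in>{-1..int M}. {z a, z b} = {z j, z (j + 1)}) \<longleftrightarrow> unit_step a b"
proof
  assume "\<exists>j\<in>{-1..int M}. {z a, z b} = {z j, z (j + 1)}"
  then obtain j where j: "j \<in> {-1..int M}" "z ` {a, b} = z ` {j, j + 1}" by auto
  then have "{a, b} = {j, j + 1}" using assms by (subst (asm) inj_on_image_eq_iff) auto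
  then show "unit_step a b" by (auto simp: doubleton_eq_iff)
next
  assume "unit_step a b"
  then have "b = a + 1 \<or> a = b + 1" by auto
  then show "\<exists>j\<in>{-1..int M}. {z a, z b} = {z j, z (j + 1)}"
    using assms(2,3) by (auto intro: bexI[of _ a] bexI[of _ b])
qed

definition transmission_walk :: "nat \<Rightarrow> int list \<Rightarrow> bool" where
  "transmission_walk M w \<longleftrightarrow> w \<noteq> [] \<and> hd w = -1 \<and> last w = int M + 1
     \<and> set (butlast (tl w)) \<subseteq> {0..int M} \<and> successively unit_step w"

lemma trans_seq_map_iff:
  assumes inj: "inj_on z {-1..int M + 1}" and w: "set w \<subseteq> {-1..int M + 1}"
  shows "trans_seq z M (map z w) \<longleftrightarrow> transmission_walk M w"
proof -
  have eq: "x \<in> set w \<Longrightarrow> y \<in> {-1..int M + 1} \<Longrightarrow> z x = z y \<longleftrightarrow> x = y" for x y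
    using inj w by (auto dest: inj_onD)
  have inner: "set (butlast (tl w)) \<subseteq> set w"
    by (cases w) (auto dest: in_set_butlastD)
  have mem: "x \<in> set w \<Longrightarrow> z x \<in> z ` {0..int M} \<longleftrightarrow> x \<in> {0..int M}" for x
    using w by (intro inj_on_image_mem_iff[OF inj]) auto
  have "set (map z (butlast (tl w))) \<subseteq> z ` {0..int M} \<longleftrightarrow> set (butlast (tl w)) \<subseteq> {0..int M}"
    unfolding set_map image_subset_iff using inner mem by blast
  moreover have "successively (\<lambda>x y. \<exists>j\<in>{-1..int M}. {x, y} = {z j, z (j + 1)}) (map z w)
      \<longleftrightarrow> successively unit_step w"
    unfolding successively_map
    by (rule successively_cong[OF _ refl]) (meson doubleton_image_eq_iff[OF inj] subsetD w)
  ultimately show ?thesis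
    unfolding trans_seq_iff transmission_walk_def using eq[of "hd w"] eq[of "last w"]
    by (auto simp: hd_map last_map map_butlast map_tl)
qed

lemma transmission_walk_iff:
  "transmission_walk M w \<longleftrightarrow> (\<exists>B. w = B @ [int M + 1] \<and> path_to (int M) B)"
proof
  assume "transmission_walk M w"
  then have w: "w \<noteq> [] \<and> hd w = -1 \<and> last w = int M + 1 \<and> set (butlast (tl w)) \<subseteq> {0..int M}
     \<and> successively unit_step w"
    by (simp add: transmission_walk_def)
  define B where "B = butlast w"
  have w_eq: "w = B @ [int M + 1]" using w unfolding B_def by (metis append_butlast_last_id)
  have B_ne: "B \<noteq> []" using w w_eq by auto
  have hd_B: "hd B = -1" using w w_eq B_ne by simp
  have tl_B: "set (tl B) \<subseteq> {0..int M}" using w by (simp add: B_def butlast_tl)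
  have steps_B: "successively unit_step B" and "unit_step (last B) (int M + 1)"
    using w w_eq B_ne by (auto simp: successively_append_iff)
  moreover have "last B \<le> int M"
    using hd_B tl_B last_in_set[OF B_ne] by (cases B) auto
  ultimately have "last B = int M" by auto
  then show "\<exists>B. w = B @ [int M + 1] \<and> path_to (int M) B"
    using w_eq B_ne hd_B tl_B steps_B by (auto simp: path_to_def)
next
  assume "\<exists>B. w = B @ [int M + 1] \<and> path_to (int M) B"
  then obtain B where "w = B @ [int M + 1]" "path_to (int M) B" by blast
  then show "transmission_walk M w"
    by (auto simp: transmission_walk_def path_to_def successively_append_iff butlast_tl)
qed

lemma S_M'_eq_image:
  assumes inj: "inj_on z {-1..int M + 1}"
  shows "S_M' z M = (\<lambda>B. map z (B @ [int M + 1])) ` {B. path_to (int M) B}"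
proof (intro set_eqI iffI)
  fix p assume "p \<in> S_M' z M"
  then have p: "trans_seq z M p" by (simp add: S_M'_def)
  have "set p \<subseteq> z ` {-1..int M + 1}"
    using p set_subset_hd_last_inner[of p] unfolding trans_seq_iff by fastforce
  define w where "w = map (inv_into {-1..int M + 1} z) p"
  have p_eq: "p = map z w"
    using \<open>set p \<subseteq> _\<close> by (auto simp: w_def map_idI f_inv_into_f subset_iff)
  have w: "set w \<subseteq> {-1..int M + 1}"
    using \<open>set p \<subseteq> _\<close> inv_into_into[of _ z "{-1..int M + 1}"]
    unfolding w_def set_map image_subset_iff by blast
  have "\<exists>B. w = B @ [int M + 1] \<and> path_to (int M) B"
    using p unfolding p_eq trans_seq_map_iff[OF inj w] transmission_walk_iff .
  then obtain B where "w = B @ [int M + 1]" "path_to (int M) B" by blast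
  then show "p \<in> (\<lambda>B. map z (B @ [int M + 1])) ` {B. path_to (int M) B}"
    using p_eq by blast
next
  fix p assume "p \<in> (\<lambda>B. map z (B @ [int M + 1])) ` {B. path_to (int M) B}"
  then obtain B where B: "path_to (int M) B" and p_eq: "p = map z (B @ [int M + 1])" by blast
  have w: "set (B @ [int M + 1]) \<subseteq> {-1..int M + 1}" using set_path_to[OF B] by auto
  have "trans_seq z M (map z (B @ [int M + 1]))"
    unfolding trans_seq_map_iff[OF inj w] transmission_walk_iff using B by blast
  then show "p \<in> S_M' z M" using p_eq by (simp add: S_M'_def)
qed

lemma is_run_start_exists:
  fixes Q :: "nat \<Rightarrow> bool"
  assumes "Q b"
  shows "\<exists>a\<le>b. (\<forall>i\<in>{a..b}. Q i) \<and> (a = 0 \<or> \<not> Q (a - 1))"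
  using assms
proof (induction b)
  case (Suc b)
  show ?case
  proof (cases "Q b")
    case True
    then obtain a where "a \<le> b" "\<forall>i\<in>{a..b}. Q i" "a = 0 \<or> \<not> Q (a - 1)" using Suc.IH by blast
    then show ?thesis using Suc.prems by (intro exI[of _ a]) (auto simp: le_Suc_eq)
  next
    case False
    then show ?thesis using Suc.prems by (intro exI[of _ "Suc b"]) auto
  qed
qed auto

lemma is_run_unique_start:
  assumes "is_run Q L a b" "is_run Q L a' b"
  shows "a = a'"
proof -
  have "\<not> a < a'" if "is_run Q L a b" "is_run Q L a' b" for a a'
  proof
    assume "a < a'"
    then have "a' - 1 \<in> {a..b}" "\<not> Q (a' - 1)" using that by (auto simp: is_run_def)
    then show False using that(1) by (auto simp: is_run_def)
  qed
  then show ?thesis using assms by (meson linorder_neqE_nat)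
qed

lemma is_run_cong:
  assumes "\<And>i. i \<le> L \<Longrightarrow> Q i = Q' i"
  shows "is_run Q L a b = is_run Q' L a b"
proof (cases "a \<le> b \<and> b \<le> L")
  case True
  then have "(\<forall>i\<in>{a..b}. Q i) = (\<forall>i\<in>{a..b}. Q' i)" "Q (a - 1) = Q' (a - 1)"
    "b \<noteq> L \<Longrightarrow> Q (b + 1) = Q' (b + 1)"
    using assms by auto
  then show ?thesis unfolding is_run_def by blast
qed (auto simp: is_run_def)

text \<open>A run is determined by its right end.\<close>

lemma card_nontrunk_runs:
  "card {(a, b). is_run Q L a b \<and> b \<noteq> L \<and> P a b} = card {b. b < L \<and> (\<exists>a. is_run Q L a b \<and> P a b)}"
proof -
  let ?R = "{(a, b). is_run Q L a b \<and> b \<noteq> L \<and> P a b}"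
  have "inj_on snd ?R"
    by (rule inj_onI) (auto intro: is_run_unique_start)
  moreover have "snd ` ?R = {b. b < L \<and> (\<exists>a. is_run Q L a b \<and> P a b)}"
  proof (intro set_eqI iffI)
    fix b assume "b \<in> snd ` ?R"
    then obtain a where "is_run Q L a b" "b \<noteq> L" "P a b" by auto
    then show "b \<in> {b. b < L \<and> (\<exists>a. is_run Q L a b \<and> P a b)}" by (auto simp: is_run_def)
  next
    fix b assume "b \<in> {b. b < L \<and> (\<exists>a. is_run Q L a b \<and> P a b)}"
    then obtain a where "b < L" "is_run Q L a b" "P a b" by auto
    then show "b \<in> snd ` ?R" by (intro image_eqI[of _ snd "(a, b)"]) auto
  qed
  ultimately show ?thesis using card_image by fastforce
qed

lemma ex_is_run_iff: "b < L \<Longrightarrow> (\<exists>a. is_run Q L a b) \<longleftrightarrow> Q b \<and> \<not> Q (Suc b)"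
  using is_run_start_exists[of Q b] by (auto simp: is_run_def)

lemma ex_long_is_run_iff:
  assumes "b < L"
  shows "(\<exists>a. is_run Q L a b \<and> 2 \<le> b - a + 1) \<longleftrightarrow> Q b \<and> \<not> Q (Suc b) \<and> 0 < b \<and> Q (b - 1)"
proof
  assume "\<exists>a. is_run Q L a b \<and> 2 \<le> b - a + 1"
  then obtain a where "is_run Q L a b" "a < b" by auto
  then show "Q b \<and> \<not> Q (Suc b) \<and> 0 < b \<and> Q (b - 1)" using assms by (auto simp: is_run_def)
next
  assume Q: "Q b \<and> \<not> Q (Suc b) \<and> 0 < b \<and> Q (b - 1)"
  then obtain a where a: "a \<le> b" "\<forall>i\<in>{a..b}. Q i" "a = 0 \<or> \<not> Q (a - 1)"
    using is_run_start_exists[of Q b] by blast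
  then have "a \<noteq> b" using Q by auto
  then show "\<exists>a. is_run Q L a b \<and> 2 \<le> b - a + 1"
    using a Q assms by (intro exI[of _ a]) (auto simp: is_run_def)
qed

section \<open>Run statistics of scattering sequences\<close>

context
  fixes z :: "int \<Rightarrow> real" and M :: nat and B :: "int list" and n :: nat
  assumes inj: "inj_on z {-1..int M + 1}" and path: "path_to (int M) B" and n: "n \<le> M"
begin

private definition w :: "int list" where
  "w = B @ [int M + 1]"

private lemma length_w: "length w = Suc (length B)"
  by (simp add: w_def)

private lemma set_w: "set w \<subseteq> {-1..int M + 1}"
  using set_path_to[OF path] by (auto simp: w_def)

private lemma unit_step_w: "Suc i < length w \<Longrightarrow> unit_step (w ! i) (w ! Suc i)"
  using path successively_nth[of unit_step w]
  by (auto simp: w_def path_to_def successively_append_iff)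

private lemma runs_of_w: "runs_of z M (map z w) (int n) = {(a, b). is_run (\<lambda>i. int n \<le> w ! i) (length B) a b}"
proof -
  have eq: "map z w ! i \<in> z ` {int n..int M + 1} \<longleftrightarrow> int n \<le> w ! i" if "i \<le> length B" for i
  proof -
    have i: "i < length w" using that length_w by simp
    then have "w ! i \<in> {-1..int M + 1}" using set_w nth_mem by blast
    moreover have "z (w ! i) \<in> z ` {int n..int M + 1} \<longleftrightarrow> w ! i \<in> {int n..int M + 1}"
      using inj calculation by (intro inj_on_image_mem_iff) auto
    ultimately show ?thesis using i by auto
  qed
  have runs_eq: "is_run (\<lambda>i. map z w ! i \<in> z ` {int n..int M + 1}) (length B) a b
      \<longleftrightarrow> is_run (\<lambda>i. int n \<le> w ! i) (length B) a b" for a b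
    by (rule is_run_cong) (rule eq)
  show ?thesis
    unfolding runs_of_def length_map length_w diff_Suc_1 using runs_eq by blast
qed

private lemma descent_iff:
  assumes "b < length B"
  shows "int n \<le> w ! b \<and> \<not> int n \<le> w ! Suc b \<longleftrightarrow> w ! b = int n \<and> w ! Suc b = int n - 1"
  using unit_step_w[of b] assms length_w by auto

lemma k_n_map_path: "k_n z M (map z (B @ [int M + 1])) (int n) = descents (int n) B"
proof -
  let ?Q = "\<lambda>i. int n \<le> w ! i"
  have "k_n z M (map z w) (int n) = card {(a, b). is_run ?Q (length B) a b \<and> b \<noteq> length B \<and> True}"
    unfolding k_n_def runs_of_w by (simp add: length_w)
  also have "\<dots> = card {b. b < length B \<and> (\<exists>a. is_run ?Q (length B) a b \<and> True)}"
    by (rule card_nontrunk_runs)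
  also have "{b. b < length B \<and> (\<exists>a. is_run ?Q (length B) a b \<and> True)} =
      {i. Suc i < length w \<and> w ! i = int n \<and> w ! Suc i = int n - 1}"
    by (intro Collect_cong) (use ex_is_run_iff descent_iff length_w in fastforce)
  also have "card \<dots> = descents (int n) (B @ [int M + 1])"
    by (simp add: descents_def count_adj_eq_card w_def)
  also have "\<dots> = descents (int n) B"
    using n by (simp add: descents_def count_adj_snoc)
  finally show ?thesis by (simp add: w_def)
qed

lemma m_n_map_path: "m_n z M (map z (B @ [int M + 1])) (int n) = double_descents (int n) B"
proof -
  let ?Q = "\<lambda>i. int n \<le> w ! i"
  have "m_n z M (map z w) (int n) =
      card {(a, b). is_run ?Q (length B) a b \<and> b \<noteq> length B \<and> 2 \<le> b - a + 1}"
    unfolding m_n_def runs_of_w by (simp add: length_w)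
  also have "\<dots> = card {b. b < length B \<and> (\<exists>a. is_run ?Q (length B) a b \<and> 2 \<le> b - a + 1)}"
    by (rule card_nontrunk_runs)
  also have "{b. b < length B \<and> (\<exists>a. is_run ?Q (length B) a b \<and> 2 \<le> b - a + 1)} =
      Suc ` {i. Suc (Suc i) < length w \<and> double_descent (int n) (w ! i) (w ! Suc i) (w ! Suc (Suc i))}"
  proof (intro set_eqI iffI)
    fix b assume "b \<in> {b. b < length B \<and> (\<exists>a. is_run ?Q (length B) a b \<and> 2 \<le> b - a + 1)}"
    then have b: "b < length B" "?Q b" "\<not> ?Q (Suc b)" "0 < b" "?Q (b - 1)"
      using ex_long_is_run_iff[of b "length B" ?Q] by auto
    then obtain i where i: "b = Suc i" by (cases b) auto
    have "unit_step (w ! i) (w ! b)" using unit_step_w[of i] b i length_w by simp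
    then have "double_descent (int n) (w ! i) (w ! Suc i) (w ! Suc (Suc i))"
      using b i descent_iff[of b] by (auto simp: double_descent_def)
    then show "b \<in> Suc ` {i. Suc (Suc i) < length w \<and> double_descent (int n) (w ! i) (w ! Suc i) (w ! Suc (Suc i))}"
      using b i length_w by auto
  next
    fix b assume "b \<in> Suc ` {i. Suc (Suc i) < length w \<and> double_descent (int n) (w ! i) (w ! Suc i) (w ! Suc (Suc i))}"
    then obtain i where i: "b = Suc i" "Suc b < length w" "double_descent (int n) (w ! i) (w ! b) (w ! Suc b)"
      by auto
    then have "b < length B" "?Q b" "\<not> ?Q (Suc b)" "0 < b" "?Q (b - 1)"
      using length_w by (auto simp: double_descent_def)
    then show "b \<in> {b. b < length B \<and> (\<exists>a. is_run ?Q (length B) a b \<and> 2 \<le> b - a + 1)}"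
      using ex_long_is_run_iff[of b "length B" ?Q] by blast
  qed
  also have "card \<dots> = double_descents (int n) (B @ [int M + 1])"
    by (simp add: card_image double_descents_def count_adj3_eq_card w_def)
  also have "\<dots> = double_descents (int n) B"
    unfolding double_descents_def using n by (subst count_adj3_snoc) (auto simp: double_descent_def)
  finally show ?thesis by (simp add: w_def)
qed

end

lemma map_upto_eq_iff:
  assumes "length k = Suc M"
  shows "map f [0..int M] = k \<longleftrightarrow> (\<forall>n\<le>M. f (int n) = k ! n)"
  using assms by (auto simp: list_eq_iff_nth_eq less_Suc_eq_le)

lemma kappa'_map_path_eq_iff:
  assumes "inj_on z {-1..int M + 1}" "path_to (int M) B" "length k = Suc M"
  shows "kappa' z M (map z (B @ [int M + 1])) = k \<longleftrightarrow> (\<forall>n\<le>M. descents (int n) B = k ! n)"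
  using assms k_n_map_path by (simp add: kappa'_def map_upto_eq_iff)

lemma beta'_map_path_eq_iff:
  assumes "inj_on z {-1..int M + 1}" "path_to (int M) B" "length m = Suc M"
  shows "beta' z M (map z (B @ [int M + 1])) = m \<longleftrightarrow> (\<forall>n\<le>M. double_descents (int n) B = m ! n)"
  using assms m_n_map_path by (simp add: beta'_def map_upto_eq_iff)

lemma scattering_sequences_with_stats_eq_image:
  assumes inj: "inj_on z {-1..int M + 1}" and "length k = Suc M" "length m = Suc M"
  shows "{p \<in> S_M' z M. kappa' z M p = k \<and> beta' z M p = m}
           = (\<lambda>B. map z (B @ [int M + 1])) ` paths_with_stats M k m"
proof -
  have stats_iff: "B \<in> paths_with_stats M k m \<longleftrightarrow>
      path_to (int M) B \<and> kappa' z M (map z (B @ [int M + 1])) = k \<and> beta' z M (map z (B @ [int M + 1])) = m"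
    for B
    using kappa'_map_path_eq_iff[OF inj _ assms(2)] beta'_map_path_eq_iff[OF inj _ assms(3)]
    by (auto simp: paths_with_stats_def)
  show ?thesis
    unfolding S_M'_eq_image[OF inj]
  proof (intro set_eqI iffI)
    fix p
    assume "p \<in> {p \<in> (\<lambda>B. map z (B @ [int M + 1])) ` {B. path_to (int M) B}. kappa' z M p = k \<and> beta' z M p = m}"
    then obtain B where "path_to (int M) B" "p = map z (B @ [int M + 1])" "kappa' z M p = k" "beta' z M p = m"
      by blast
    then show "p \<in> (\<lambda>B. map z (B @ [int M + 1])) ` paths_with_stats M k m"
      using stats_iff by blast
  next
    fix p assume "p \<in> (\<lambda>B. map z (B @ [int M + 1])) ` paths_with_stats M k m"
    then obtain B where "B \<in> paths_with_stats M k m" "p = map z (B @ [int M + 1])" by blast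
    then show "p \<in> {p \<in> (\<lambda>B. map z (B @ [int M + 1])) ` {B. path_to (int M) B}. kappa' z M p = k \<and> beta' z M p = m}"
      using stats_iff by blast
  qed
qed

lemma inj_on_map_path:
  assumes inj: "inj_on z {-1..int M + 1}"
  shows "inj_on (\<lambda>B. map z (B @ [int M + 1])) {B. path_to (int M) B}"
proof (rule inj_onI)
  fix B B' assume "B \<in> {B. path_to (int M) B}" "B' \<in> {B. path_to (int M) B}"
    and eq: "map z (B @ [int M + 1]) = map z (B' @ [int M + 1])"
  then have "set (B @ [int M + 1]) \<union> set (B' @ [int M + 1]) \<subseteq> {-1..int M + 1}"
    using set_path_to[of "int M" B] set_path_to[of "int M" B'] by auto
  then have "inj_on z (set (B @ [int M + 1]) \<union> set (B' @ [int M + 1]))"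
    using inj_on_subset[OF inj] by blast
  then have "B @ [int M + 1] = B' @ [int M + 1]" using eq by (simp only: inj_on_map_eq_map)
  then show "B = B'" by simp
qed

theorem lemma4:
  fixes z :: "int \<Rightarrow> real" and M :: nat and k m :: "nat list"
  assumes "strict_mono_on {-1..int M + 1} z"
    and "M \<ge> 1"
    and "length k = M + 1" and "k ! 0 = 0"
    and "length m = M + 1"
    and "\<forall>n\<le>M. m ! n \<le> min (k ! n) (ktilde k ! n)"
  shows "card {p \<in> S_M' z M. kappa' z M p = k \<and> beta' z M p = m}
           = binom_vec M k m * binom_vec M (ktilde k) m"
proof -
  have inj: "inj_on z {-1..int M + 1}" using assms(1) by (rule strict_mono_on_imp_inj_on)
  have "paths_with_stats M k m \<subseteq> {B. path_to (int M) B}" by (auto simp: paths_with_stats_def)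
  then have "card {p \<in> S_M' z M. kappa' z M p = k \<and> beta' z M p = m} = card (paths_with_stats M k m)"
    using scattering_sequences_with_stats_eq_image[OF inj] assms(3,5)
      card_image[OF inj_on_subset[OF inj_on_map_path[OF inj]]] by simp
  also have "\<dots> = binom_vec M k m * binom_vec M (ktilde k) m"
    using card_paths_with_stats assms(3-6) by simp
  finally show ?thesis .
qed

end
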